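(* There is an absolute constant $c$ such that the following holds. Let $G$ be a simple graph given as a stream of $m$ distinct edges, with $W\ge m$ wedges and $T\ge1$ triangles. Fix $\beta\in(0,1)$, let $\beta'=\beta/5$, and let $\mathcal{R}_m=(r_1,\dots,r_s)$ be $s$ independent uniformly random edges of $G$ with $s\ge c\,m/(\beta^3\sqrt{T})$. Let $Y$ be the number of index pairs $i<j$ such that $\{r_i,r_j\}$ is a wedge, and $Z$ the number of index pairs $i<j$ such that $\{r_i,r_j\}$ is a future-closed wedge. Then $\mathbf{E}[Y]=s(s-1)W/m^2$ and with probability greater than $1-\beta'$, $|Y-\mathbf{E}[Y]|\le\beta'\mathbf{E}[Y]$. Moreover $\mathbf{E}[Z]=s(s-1)T/m^2$ and with probability greater than $1-\beta'$, $|Z-\mathbf{E}[Z]|\le(\beta' W/T)\mathbf{E}[Z]$.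
   Context: A wedge is a path of length 2, i.e. an unordered pair of distinct edges sharing exactly one vertex; $W$ is the number of wedges of $G$. Edges carry their stream positions $e_1,\dots,e_m$. For each triangle of $G$ with edges $e_i,e_j,e_k$, $i<j<k$, the wedge $\{e_i,e_j\}$ is called future-closed; there are exactly $T$ future-closed wedges. *)

theory Defs
  imports "HOL-Probability.Probability"
begin

definition edge_stream :: "nat set list \<Rightarrow> bool" where
  "edge_stream es \<longleftrightarrow> distinct es \<and> (\<forall>e\<in>set es. card e = 2)"

definition wedges :: "nat set list \<Rightarrow> nat set set set" where
  "wedges es = {{e, f} | e f. e \<in> set es \<and> f \<in> set es \<and> e \<noteq> f \<and> card (e \<inter> f) = 1}"

definition triangles :: "nat set list \<Rightarrow> nat set set" where
  "triangles es = {t. card t = 3 \<and> (\<forall>u\<in>t. \<forall>v\<in>t. u \<noteq> v \<longrightarrow> {u, v} \<in> set es)}"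

definition tri_edges :: "nat set \<Rightarrow> nat set set" where
  "tri_edges t = {{u, v} | u v. u \<in> t \<and> v \<in> t \<and> u \<noteq> v}"

definition fc_wedges :: "nat set list \<Rightarrow> nat set set set" where
  "fc_wedges es = {{es ! i, es ! j} | i j k. i < j \<and> j < k \<and> k < length es \<and>
      (\<exists>t\<in>triangles es. {es ! i, es ! j, es ! k} = tri_edges t)}"

definition edge_sample :: "nat set list \<Rightarrow> nat \<Rightarrow> (nat \<Rightarrow> nat set) pmf" where
  "edge_sample es s = Pi_pmf {..<s} undefined (\<lambda>_. pmf_of_set (set es))"

definition Ycount :: "nat set list \<Rightarrow> nat \<Rightarrow> (nat \<Rightarrow> nat set) \<Rightarrow> nat" where
  "Ycount es s r = card {(i, j). i < j \<and> j < s \<and> {r i, r j} \<in> wedges es}"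

definition Zcount :: "nat set list \<Rightarrow> nat \<Rightarrow> (nat \<Rightarrow> nat set) \<Rightarrow> nat" where
  "Zcount es s r = card {(i, j). i < j \<and> j < s \<and> {r i, r j} \<in> fc_wedges es}"

end

theory Submission
  imports Defs
begin

text \<open>
  Write \<open>Y\<close> as a sum of indicators over the \<open>s(s-1)/2\<close> index pairs \<open>i < j\<close>.
  Indicators on disjoint index pairs are independent, and two indicators sharing an index
  have joint expectation \<open>\<Sum>\<^sub>e d(e)\<^sup>2 / m\<^sup>3\<close>, where \<open>d(e)\<close> is the number of wedges
  containing the edge \<open>e\<close>. The edges through either endpoint of \<open>e\<close> pairwise form
  wedges, whence \<open>d(e)\<^sup>2 \<le> 4W\<close>, \<open>\<Sum>\<^sub>e d(e)\<^sup>2 \<le> 4W\<^sup>3\<^sup>/\<^sup>2\<close> and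
  \<open>Var Y \<le> E Y + 16 (s\<surd>W/m)\<^sup>3\<close>. For \<open>s \<ge> c m/(\<beta>\<^sup>3\<surd>T)\<close> this is below
  \<open>(\<beta>/5)\<^sup>3 (E Y)\<^sup>2\<close>, and Chebyshev's inequality gives the bound for \<open>Y\<close>. The same
  computation applies to \<open>Z\<close>, since the future-closed wedges are wedges (one per triangle),
  and the deviation \<open>(\<beta>' W/T) E Z\<close> allowed for \<open>Z\<close> equals \<open>\<beta>' E Y\<close>.
\<close>

section \<open>Uniform samples\<close>

lemma pair_pmf_of_set:
  assumes "finite A" "A \<noteq> {}" "finite B" "B \<noteq> {}"
  shows "pair_pmf (pmf_of_set A) (pmf_of_set B) = pmf_of_set (A \<times> B)"
proof (rule pmf_eqI)
  fix z :: "'a \<times> 'b"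
  show "pmf (pair_pmf (pmf_of_set A) (pmf_of_set B)) z = pmf (pmf_of_set (A \<times> B)) z"
    using assms by (cases z) (simp add: pmf_pair card_cartesian_product indicator_def)
qed

lemma lists_length_eq_ne_empty: "E \<noteq> {} \<Longrightarrow> {xs. set xs \<subseteq> E \<and> length xs = n} \<noteq> {}"
proof -
  assume "E \<noteq> {}"
  then obtain x where "x \<in> E" by blast
  then have "replicate n x \<in> {xs. set xs \<subseteq> E \<and> length xs = n}" by (simp add: set_replicate_conv_if)
  then show ?thesis by blast
qed

lemma map_pmf_Pi_pmf_uniform_lists:
  assumes "finite A" "distinct ks" "set ks \<subseteq> A" "finite E" "E \<noteq> {}"
  shows "map_pmf (\<lambda>r. map r ks) (Pi_pmf A d (\<lambda>_. pmf_of_set E))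
       = pmf_of_set {xs. set xs \<subseteq> E \<and> length xs = length ks}"
  using assms(1-3)
proof (induction ks arbitrary: A)
  case Nil
  have "{xs. set xs \<subseteq> E \<and> length xs = 0} = {[]}" by auto
  then show ?case by (simp add: pmf_of_set_singleton)
next
  case (Cons k ks)
  let ?L = "{xs. set xs \<subseteq> E \<and> length xs = length ks}"
  have A: "A = insert k (A - {k})" using Cons.prems by auto
  have "map_pmf (\<lambda>r. map r (k # ks)) (Pi_pmf A d (\<lambda>_. pmf_of_set E))
      = map_pmf (\<lambda>(y, f). y # map f ks) (pair_pmf (pmf_of_set E) (Pi_pmf (A - {k}) d (\<lambda>_. pmf_of_set E)))"
    using Cons.prems by (subst A, subst Pi_pmf_insert) (auto simp: pmf.map_comp o_def case_prod_unfold intro!: map_pmf_cong)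
  also have "\<dots> = map_pmf (\<lambda>(y, xs). y # xs)
      (pair_pmf (pmf_of_set E) (map_pmf (\<lambda>f. map f ks) (Pi_pmf (A - {k}) d (\<lambda>_. pmf_of_set E))))"
    by (simp add: pair_map_pmf2 pmf.map_comp o_def case_prod_unfold)
  also have "\<dots> = map_pmf (\<lambda>(y, xs). y # xs) (pair_pmf (pmf_of_set E) (pmf_of_set ?L))"
    using Cons.prems by (subst Cons.IH) auto
  also have "\<dots> = pmf_of_set ((\<lambda>(y, xs). y # xs) ` (E \<times> ?L))"
    using assms(4,5) lists_length_eq_ne_empty[OF assms(5), of "length ks"]
    by (subst pair_pmf_of_set) (fastforce simp: finite_lists_length_eq intro!: map_pmf_of_set_inj inj_onI)+
  also have "(\<lambda>(y, xs). y # xs) ` (E \<times> ?L) = {xs. set xs \<subseteq> E \<and> length xs = length (k # ks)}"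
    by (auto simp: length_Suc_conv)
  finally show ?case .
qed

lemma sum_lists_length_Suc:
  assumes "finite E"
  shows "(\<Sum>xs | set xs \<subseteq> E \<and> length xs = Suc n. g xs)
       = (\<Sum>x\<in>E. \<Sum>xs | set xs \<subseteq> E \<and> length xs = n. g (x # xs))"
proof -
  let ?L = "{xs. set xs \<subseteq> E \<and> length xs = n}"
  have "inj_on (\<lambda>(xs, x). x # xs) (?L \<times> E)"
    by (auto intro: inj_onI)
  then have "(\<Sum>xs | set xs \<subseteq> E \<and> length xs = Suc n. g xs) = (\<Sum>(xs, x)\<in>?L \<times> E. g (x # xs))"
    by (simp add: lists_length_Suc_eq sum.reindex case_prod_unfold)
  also have "\<dots> = (\<Sum>xs\<in>?L. \<Sum>x\<in>E. g (x # xs))"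
    by (rule sum.cartesian_product[symmetric])
  also have "\<dots> = (\<Sum>x\<in>E. \<Sum>xs\<in>?L. g (x # xs))"
    by (rule sum.swap)
  finally show ?thesis .
qed

lemma expectation_Pi_pmf_uniform_lists:
  assumes "finite A" "distinct ks" "set ks \<subseteq> A" "finite E" "E \<noteq> {}"
  shows "measure_pmf.expectation (Pi_pmf A d (\<lambda>_. pmf_of_set E)) (\<lambda>r. g (map r ks))
       = (\<Sum>xs | set xs \<subseteq> E \<and> length xs = length ks. g xs) / real (card E) ^ length ks"
proof -
  have "measure_pmf.expectation (Pi_pmf A d (\<lambda>_. pmf_of_set E)) (\<lambda>r. g (map r ks))
      = measure_pmf.expectation (pmf_of_set {xs. set xs \<subseteq> E \<and> length xs = length ks}) g"
    by (simp flip: map_pmf_Pi_pmf_uniform_lists[OF assms, of d])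
  also have "\<dots> = (\<Sum>xs | set xs \<subseteq> E \<and> length xs = length ks. g xs) / real (card E) ^ length ks"
    using assms(4) lists_length_eq_ne_empty[OF assms(5), of "length ks"]
    by (subst integral_pmf_of_set) (auto simp: finite_lists_length_eq card_lists_length_eq)
  finally show ?thesis .
qed


definition uniform_sample :: "'a set \<Rightarrow> nat \<Rightarrow> (nat \<Rightarrow> 'a) pmf" where
  "uniform_sample E s = Pi_pmf {..<s} undefined (\<lambda>_. pmf_of_set E)"

lemma expectation_uniform_sample_2:
  fixes f :: "'a \<Rightarrow> 'a \<Rightarrow> real"
  assumes "finite E" "E \<noteq> {}" "a < s" "b < s" "a \<noteq> b"
  shows "measure_pmf.expectation (uniform_sample E s) (\<lambda>r. f (r a) (r b))
       = (\<Sum>x\<in>E. \<Sum>y\<in>E. f x y) / real (card E) ^ 2"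
  using expectation_Pi_pmf_uniform_lists[of "{..<s}" "[a, b]" E undefined "\<lambda>xs. f (xs ! 0) (xs ! 1)"]
    assms by (simp add: uniform_sample_def numeral_eq_Suc sum_lists_length_Suc cong: conj_cong)

lemma expectation_uniform_sample_3:
  fixes f :: "'a \<Rightarrow> 'a \<Rightarrow> 'a \<Rightarrow> real"
  assumes "finite E" "E \<noteq> {}" "a < s" "b < s" "c < s" "distinct [a, b, c]"
  shows "measure_pmf.expectation (uniform_sample E s) (\<lambda>r. f (r a) (r b) (r c))
       = (\<Sum>x\<in>E. \<Sum>y\<in>E. \<Sum>z\<in>E. f x y z) / real (card E) ^ 3"
  using expectation_Pi_pmf_uniform_lists[of "{..<s}" "[a, b, c]" E undefined
      "\<lambda>xs. f (xs ! 0) (xs ! 1) (xs ! 2)"]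
    assms by (simp add: uniform_sample_def numeral_eq_Suc sum_lists_length_Suc cong: conj_cong)

lemma expectation_uniform_sample_4:
  fixes f :: "'a \<Rightarrow> 'a \<Rightarrow> 'a \<Rightarrow> 'a \<Rightarrow> real"
  assumes "finite E" "E \<noteq> {}" "a < s" "b < s" "c < s" "e < s" "distinct [a, b, c, e]"
  shows "measure_pmf.expectation (uniform_sample E s) (\<lambda>r. f (r a) (r b) (r c) (r e))
       = (\<Sum>x\<in>E. \<Sum>y\<in>E. \<Sum>z\<in>E. \<Sum>w\<in>E. f x y z w) / real (card E) ^ 4"
  using expectation_Pi_pmf_uniform_lists[of "{..<s}" "[a, b, c, e]" E undefined
      "\<lambda>xs. f (xs ! 0) (xs ! 1) (xs ! 2) (xs ! 3)"]
    assms by (simp add: uniform_sample_def numeral_eq_Suc sum_lists_length_Suc cong: conj_cong)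

lemma finite_set_pmf_uniform_sample:
  "finite E \<Longrightarrow> E \<noteq> {} \<Longrightarrow> finite (set_pmf (uniform_sample E s))"
  by (auto simp: uniform_sample_def set_Pi_pmf)

lemma measure_pmf_prob_abs_deviation_le_gt:
  fixes D :: "'a pmf" and X :: "'a \<Rightarrow> real"
  assumes "finite (set_pmf D)" "t > 0" "measure_pmf.variance D X / t ^ 2 < \<beta>"
  shows "measure_pmf.prob D {x. \<bar>X x - measure_pmf.expectation D X\<bar> \<le> t} > 1 - \<beta>"
proof -
  let ?far = "{x. \<bar>X x - measure_pmf.expectation D X\<bar> \<ge> t}"
  have "measure_pmf.prob D {x \<in> space (measure_pmf D). \<bar>X x - measure_pmf.expectation D X\<bar> \<ge> t}
      \<le> measure_pmf.variance D X / t ^ 2"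
    by (rule measure_pmf.Chebyshev_inequality) (use assms integrable_measure_pmf_finite in auto)
  then have "measure_pmf.prob D ?far \<le> measure_pmf.variance D X / t ^ 2" by simp
  moreover have "measure_pmf.prob D (UNIV - ?far) \<le> measure_pmf.prob D {x. \<bar>X x - measure_pmf.expectation D X\<bar> \<le> t}"
    by (intro measure_pmf.finite_measure_mono) auto
  ultimately show ?thesis
    using measure_pmf.prob_compl[of ?far D] assms(3) by simp
qed

section \<open>Counting sampled pairs\<close>

definition doubletons :: "'a set \<Rightarrow> 'a set set" where
  "doubletons E = {X. X \<subseteq> E \<and> card X = 2}"

lemma doubleton_in_doubletons_iff [simp]: "{x, y} \<in> doubletons E \<longleftrightarrow> x \<in> E \<and> y \<in> E \<and> x \<noteq> y"
  by (auto simp: doubletons_def card_2_iff)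

lemma in_doubletonsE:
  assumes "X \<in> doubletons E"
  obtains x y where "X = {x, y}" "x \<in> E" "y \<in> E" "x \<noteq> y"
  using assms by (auto simp: doubletons_def card_2_iff)

lemma finite_doubletons: "finite E \<Longrightarrow> finite (doubletons E)"
  by (rule finite_subset[of _ "Pow E"]) (auto simp: doubletons_def)

lemma card_doubletons: "finite E \<Longrightarrow> card (doubletons E) = card E choose 2"
  by (simp add: doubletons_def n_subsets)

lemma doubletons_mono: "A \<subseteq> B \<Longrightarrow> doubletons A \<subseteq> doubletons B"
  by (auto simp: doubletons_def)

lemma doubletons_Int: "doubletons A \<inter> doubletons B = doubletons (A \<inter> B)"
  by (auto simp: doubletons_def)

lemma doubletons_singleton: "doubletons {x} = {}"
  by (auto simp: doubletons_def dest: card_mono[rotated, of _ "{x}"])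

lemma card_neighbours_eq_card_containing:
  assumes "S \<subseteq> doubletons E" "x \<in> E"
  shows "card {y \<in> E. {x, y} \<in> S} = card {w \<in> S. x \<in> w}"
proof (rule bij_betw_same_card)
  show "bij_betw (\<lambda>y. {x, y}) {y \<in> E. {x, y} \<in> S} {w \<in> S. x \<in> w}"
  proof (rule bij_betw_imageI)
    show "inj_on (\<lambda>y. {x, y}) {y \<in> E. {x, y} \<in> S}"
      by (auto intro!: inj_onI simp: doubleton_eq_iff)
    show "(\<lambda>y. {x, y}) ` {y \<in> E. {x, y} \<in> S} = {w \<in> S. x \<in> w}"
    proof (intro equalityI subsetI)
      fix w assume w: "w \<in> {w \<in> S. x \<in> w}"
      then have "w \<in> doubletons E" using assms(1) by blast
      then obtain a b where "w = {a, b}" "a \<in> E" "b \<in> E" by (rule in_doubletonsE)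
      with w show "w \<in> (\<lambda>y. {x, y}) ` {y \<in> E. {x, y} \<in> S}"
        by (auto simp: insert_commute)
    qed auto
  qed
qed

lemma sum_card_neighbours:
  assumes "finite E" "S \<subseteq> doubletons E"
  shows "(\<Sum>x\<in>E. card {y \<in> E. {x, y} \<in> S}) = 2 * card S"
proof -
  have "finite S"
    using assms finite_doubletons finite_subset by blast
  moreover have "card {x \<in> E. x \<in> w} = 2" if "w \<in> S" for w
  proof -
    have "w \<subseteq> E" "card w = 2" using that assms(2) by (auto simp: doubletons_def)
    moreover from \<open>w \<subseteq> E\<close> have "{x \<in> E. x \<in> w} = w" by blast
    ultimately show ?thesis by simp
  qed
  ultimately have "(\<Sum>x\<in>E. card {w \<in> S. x \<in> w}) = 2 * card S"
    using assms(1) by (intro sum_multicount) auto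
  then show ?thesis
    using assms by (simp add: card_neighbours_eq_card_containing)
qed


definition pair_count :: "'a set set \<Rightarrow> nat \<Rightarrow> (nat \<Rightarrow> 'a) \<Rightarrow> nat" where
  "pair_count S s r = card {(i, j). i < j \<and> j < s \<and> {r i, r j} \<in> S}"

lemma card_index_pairs: "2 * card {(i::nat, j). i < j \<and> j < s} = s * (s - 1)"
proof (induction s)
  case (Suc n)
  have eq: "{(i::nat, j). i < j \<and> j < Suc n} = {(i, j). i < j \<and> j < n} \<union> (\<lambda>i. (i, n)) ` {..<n}"
    by auto
  have "finite {(i::nat, j). i < j \<and> j < n}"
    by (rule finite_subset[of _ "{..<n} \<times> {..<n}"]) auto
  then have "card {(i::nat, j). i < j \<and> j < Suc n} = card {(i, j). i < j \<and> j < n} + n"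
    unfolding eq by (subst card_Un_disjoint) (auto simp: card_image inj_on_def)
  with Suc.IH show ?case by (cases n) (auto simp: algebra_simps)
qed simp

lemma finite_index_pairs: "finite {(i::nat, j). i < j \<and> j < s}"
  by (rule finite_subset[of _ "{..<s} \<times> {..<s}"]) auto

lemma pair_count_eq_sum:
  "real (pair_count S s r) = (\<Sum>p\<in>{(i, j). i < j \<and> j < s}. of_bool ({r (fst p), r (snd p)} \<in> S))"
proof -
  have "{(i, j). i < j \<and> j < s \<and> {r i, r j} \<in> S}
      = {(i, j). i < j \<and> j < s} \<inter> {p. {r (fst p), r (snd p)} \<in> S}"
    by auto
  then show ?thesis
    by (simp add: pair_count_def finite_index_pairs)
qed

lemma card_index_pairs_sharing:
  "card {q \<in> {(i::nat, j). i < j \<and> j < s}. q \<noteq> p \<and> {fst p, snd p} \<inter> {fst q, snd q} \<noteq> {}} \<le> 4 * s"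
proof -
  let ?I = "{fst p, snd p}"
  have "card {q \<in> {(i::nat, j). i < j \<and> j < s}. q \<noteq> p \<and> ?I \<inter> {fst q, snd q} \<noteq> {}}
      \<le> card (?I \<times> {..<s} \<union> {..<s} \<times> ?I)"
    by (intro card_mono) auto
  also have "\<dots> \<le> card (?I \<times> {..<s}) + card ({..<s} \<times> ?I)"
    by (rule card_Un_le)
  also have "\<dots> \<le> 2 * s + s * 2"
    by (simp add: card_cartesian_product card_insert_le_m1 card_insert_if)
  finally show ?thesis by simp
qed

lemma sum_card_index_pairs_sharing_le:
  "(\<Sum>p\<in>{(i::nat, j). i < j \<and> j < s}.
      real (card {q \<in> {(i, j). i < j \<and> j < s}. q \<noteq> p \<and> {fst p, snd p} \<inter> {fst q, snd q} \<noteq> {}}))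
     \<le> 4 * real s ^ 3"
proof -
  let ?P = "{(i::nat, j). i < j \<and> j < s}"
  have "2 * card ?P = s * (s - 1)" by (rule card_index_pairs)
  also have "\<dots> \<le> 2 * s ^ 2"
    by (rule order_trans[OF mult_le_mono2[OF diff_le_self]]) (simp add: power2_eq_square)
  finally have card_P: "real (card ?P) \<le> real s ^ 2" by simp
  have "(\<Sum>p\<in>?P. real (card {q \<in> ?P. q \<noteq> p \<and> {fst p, snd p} \<inter> {fst q, snd q} \<noteq> {}}))
      \<le> (\<Sum>p\<in>?P. 4 * real s)"
  proof (rule sum_mono)
    fix p
    have "card {q \<in> ?P. q \<noteq> p \<and> {fst p, snd p} \<inter> {fst q, snd q} \<noteq> {}} \<le> 4 * s"
      by (rule card_index_pairs_sharing)
    then show "real (card {q \<in> ?P. q \<noteq> p \<and> {fst p, snd p} \<inter> {fst q, snd q} \<noteq> {}}) \<le> 4 * real s"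
      by simp
  qed
  also have "\<dots> \<le> real s ^ 2 * (4 * real s)"
    using card_P by (simp add: mult_right_mono)
  also have "\<dots> = 4 * real s ^ 3"
    by (simp add: power2_eq_square power3_eq_cube)
  finally show ?thesis .
qed

lemma index_pairs_cases:
  fixes i j k l :: nat
  assumes "i < j" "k < l"
  obtains "(i, j) = (k, l)"
    | "{i, j} \<inter> {k, l} = {}"
    | c x y where "{i, j} = {c, x}" "{k, l} = {c, y}" "distinct [c, x, y]" "(i, j) \<noteq> (k, l)"
proof (cases "(i, j) = (k, l) \<or> {i, j} \<inter> {k, l} = {}")
  case False
  then obtain c where c: "c \<in> {i, j}" "c \<in> {k, l}" and ne: "(i, j) \<noteq> (k, l)" by blast
  define x where "x = (if c = i then j else i)"
  define y where "y = (if c = k then l else k)"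
  have ij: "{i, j} = {c, x}" and kl: "{k, l} = {c, y}"
    using c by (auto simp: x_def y_def)
  have "x \<noteq> y"
  proof
    assume "x = y"
    then have "{i, j} = {k, l}" using ij kl by simp
    with assms have "(i, j) = (k, l)" by (auto simp: doubleton_eq_iff)
    with ne show False ..
  qed
  moreover have "c \<noteq> x" "c \<noteq> y" using c assms by (auto simp: x_def y_def)
  ultimately show ?thesis using that(3) ij kl ne by simp
qed (use that in blast)

lemma sum_index_pairs_moment_bound:
  fixes \<mu> a :: real and s :: nat
  assumes "0 \<le> a"
  defines "P \<equiv> {(i::nat, j). i < j \<and> j < s}"
  shows "(\<Sum>p\<in>P. \<Sum>q\<in>P. \<mu> ^ 2 + of_bool (p = q) * \<mu>
            + of_bool (q \<noteq> p \<and> {fst p, snd p} \<inter> {fst q, snd q} \<noteq> {}) * a)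
       \<le> (real (card P) * \<mu>) ^ 2 + real (card P) * \<mu> + 4 * real s ^ 3 * a"
proof -
  define sharing where "sharing p = card {q \<in> P. q \<noteq> p \<and> {fst p, snd p} \<inter> {fst q, snd q} \<noteq> {}}"
    for p :: "nat \<times> nat"
  have "(\<Sum>p\<in>P. \<Sum>q\<in>P. \<mu> ^ 2 + of_bool (p = q) * \<mu>
            + of_bool (q \<noteq> p \<and> {fst p, snd p} \<inter> {fst q, snd q} \<noteq> {}) * a)
      = (\<Sum>p\<in>P. real (card P) * \<mu> ^ 2 + \<mu> + real (sharing p) * a)"
  proof (intro sum.cong refl)
    fix p assume p: "p \<in> P"
    have "(\<Sum>q\<in>P. of_bool (p = q) * \<mu>) = (\<Sum>q\<in>P. if p = q then \<mu> else 0)"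
      by (intro sum.cong) auto
    also have "\<dots> = \<mu>"
      using p finite_index_pairs by (simp add: P_def)
    finally have "(\<Sum>q\<in>P. of_bool (p = q) * \<mu>) = \<mu>" .
    moreover have "(\<Sum>q\<in>P. of_bool (q \<noteq> p \<and> {fst p, snd p} \<inter> {fst q, snd q} \<noteq> {}) * a)
        = real (sharing p) * a"
      using finite_index_pairs by (simp add: P_def sharing_def sum_distrib_right[symmetric] Int_def)
    ultimately show "(\<Sum>q\<in>P. \<mu> ^ 2 + of_bool (p = q) * \<mu>
          + of_bool (q \<noteq> p \<and> {fst p, snd p} \<inter> {fst q, snd q} \<noteq> {}) * a)
        = real (card P) * \<mu> ^ 2 + \<mu> + real (sharing p) * a"
      by (simp add: sum.distrib)
  qed
  also have "\<dots> = (real (card P) * \<mu>) ^ 2 + real (card P) * \<mu> + a * (\<Sum>p\<in>P. real (sharing p))"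
    by (simp add: sum.distrib sum_distrib_left power2_eq_square algebra_simps)
  also have "\<dots> \<le> (real (card P) * \<mu>) ^ 2 + real (card P) * \<mu> + a * (4 * real s ^ 3)"
    using sum_card_index_pairs_sharing_le[of s] assms(1)
    by (intro add_left_mono mult_left_mono) (simp_all add: P_def sharing_def)
  finally show ?thesis by (simp add: mult_ac)
qed

context
  fixes E :: "'a set" and S :: "'a set set" and s :: nat
  assumes finite_E: "finite E" and E_ne: "E \<noteq> {}" and S_doubletons: "S \<subseteq> doubletons E"
begin

private abbreviation deg :: "'a \<Rightarrow> real" where
  "deg x \<equiv> real (card {y \<in> E. {x, y} \<in> S})"

private lemma sum_of_bool_pair_in: "(\<Sum>y\<in>E. of_bool ({x, y} \<in> S) :: real) = deg x"
proof -
  have "E \<inter> {y. {x, y} \<in> S} = {y \<in> E. {x, y} \<in> S}" by blast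
  then show ?thesis using finite_E by simp
qed

private lemma sum_sum_of_bool_pair_in: "(\<Sum>x\<in>E. \<Sum>y\<in>E. of_bool ({x, y} \<in> S) :: real) = 2 * real (card S)"
proof -
  have "(\<Sum>x\<in>E. deg x) = real (\<Sum>x\<in>E. card {y \<in> E. {x, y} \<in> S})"
    by (rule of_nat_sum[symmetric])
  also have "\<dots> = 2 * real (card S)"
    using sum_card_neighbours[OF finite_E S_doubletons] by simp
  finally show ?thesis by (simp only: sum_of_bool_pair_in)
qed

lemma expectation_pair_indicator:
  assumes "i < s" "j < s" "i \<noteq> j"
  shows "measure_pmf.expectation (uniform_sample E s) (\<lambda>r. of_bool ({r i, r j} \<in> S))
       = 2 * real (card S) / real (card E) ^ 2"
  using expectation_uniform_sample_2[OF finite_E E_ne assms, of "\<lambda>x y. of_bool ({x, y} \<in> S)"]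
  by (simp only: sum_sum_of_bool_pair_in)

lemma expectation_pair_indicator_shared:
  assumes "c < s" "a < s" "b < s" "distinct [c, a, b]"
  shows "measure_pmf.expectation (uniform_sample E s)
           (\<lambda>r. of_bool ({r c, r a} \<in> S) * of_bool ({r c, r b} \<in> S))
       = (\<Sum>x\<in>E. deg x ^ 2) / real (card E) ^ 3"
  using expectation_uniform_sample_3[OF finite_E E_ne assms,
      of "\<lambda>x y z. of_bool ({x, y} \<in> S) * of_bool ({x, z} \<in> S)"]
  by (simp only: sum_product[symmetric] sum_of_bool_pair_in power2_eq_square)

lemma expectation_pair_indicator_disjoint:
  assumes "i < s" "j < s" "k < s" "l < s" "distinct [i, j, k, l]"
  shows "measure_pmf.expectation (uniform_sample E s)
           (\<lambda>r. of_bool ({r i, r j} \<in> S) * of_bool ({r k, r l} \<in> S))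
       = (2 * real (card S) / real (card E) ^ 2) ^ 2"
proof -
  have "(\<Sum>x\<in>E. \<Sum>y\<in>E. \<Sum>z\<in>E. \<Sum>w\<in>E. of_bool ({x, y} \<in> S) * of_bool ({z, w} \<in> S))
      = (\<Sum>x\<in>E. \<Sum>y\<in>E. of_bool ({x, y} \<in> S) :: real) ^ 2"
    by (simp only: power2_eq_square sum_distrib_right) (simp only: sum_distrib_left)
  with expectation_uniform_sample_4[OF finite_E E_ne assms,
        of "\<lambda>x y z w. of_bool ({x, y} \<in> S) * of_bool ({z, w} \<in> S)"]
  show ?thesis
    by (simp only: sum_sum_of_bool_pair_in power_divide power_mult_distrib flip: power_mult) simp
qed

lemma expectation_pair_indicator_product_le:
  assumes "i < j" "j < s" "k < l" "l < s"
  defines "\<mu> \<equiv> 2 * real (card S) / real (card E) ^ 2"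
  shows "measure_pmf.expectation (uniform_sample E s)
           (\<lambda>r. of_bool ({r i, r j} \<in> S) * of_bool ({r k, r l} \<in> S))
       \<le> \<mu> ^ 2 + of_bool ((i, j) = (k, l)) * \<mu>
         + of_bool ((i, j) \<noteq> (k, l) \<and> {i, j} \<inter> {k, l} \<noteq> {}) * ((\<Sum>x\<in>E. deg x ^ 2) / real (card E) ^ 3)"
proof -
  have \<mu>_nonneg: "\<mu> \<ge> 0" by (simp add: \<mu>_def)
  from assms(1,3) show ?thesis
  proof (cases rule: index_pairs_cases)
    case 1
    then have "(\<lambda>r. of_bool ({r i, r j} \<in> S) * of_bool ({r k, r l} \<in> S) :: real)
        = (\<lambda>r. of_bool ({r i, r j} \<in> S))"
      by auto
    then show ?thesis
      using 1 expectation_pair_indicator[of i j] assms \<mu>_nonneg by (simp add: \<mu>_def)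
  next
    case 2
    then show ?thesis
      using expectation_pair_indicator_disjoint[of i j k l] assms by (auto simp: \<mu>_def)
  next
    case (3 c x y)
    have "{r i, r j} = {r c, r x}" "{r k, r l} = {r c, r y}" for r :: "nat \<Rightarrow> 'a"
      using image_insert[of r] 3(1,2) by (metis image_empty)+
    moreover have "c \<in> {i, j}" "x \<in> {i, j}" "y \<in> {k, l}"
      using 3(1,2) by auto
    then have "c < s" "x < s" "y < s" using assms(1-4) by auto
    ultimately show ?thesis
      using expectation_pair_indicator_shared[of c x y] 3 \<mu>_nonneg by simp
  qed
qed

private lemma integrable_uniform_sample: "integrable (measure_pmf (uniform_sample E s)) (f :: _ \<Rightarrow> real)"
  by (rule integrable_measure_pmf_finite[OF finite_set_pmf_uniform_sample[OF finite_E E_ne]])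

private lemma expectation_pair_count_index_pairs:
  "measure_pmf.expectation (uniform_sample E s) (\<lambda>r. real (pair_count S s r))
     = real (card {(i::nat, j). i < j \<and> j < s}) * (2 * real (card S) / real (card E) ^ 2)"
proof -
  let ?P = "{(i::nat, j). i < j \<and> j < s}"
  have "measure_pmf.expectation (uniform_sample E s) (\<lambda>r. real (pair_count S s r))
      = (\<Sum>p\<in>?P. measure_pmf.expectation (uniform_sample E s) (\<lambda>r. of_bool ({r (fst p), r (snd p)} \<in> S)))"
    unfolding pair_count_eq_sum by (intro Bochner_Integration.integral_sum integrable_uniform_sample)
  also have "\<dots> = (\<Sum>p\<in>?P. 2 * real (card S) / real (card E) ^ 2)"
    by (intro sum.cong refl) (auto intro: expectation_pair_indicator)
  finally show ?thesis by simp
qed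

lemma expectation_pair_count:
  "measure_pmf.expectation (uniform_sample E s) (\<lambda>r. real (pair_count S s r))
     = real s * (real s - 1) * real (card S) / real (card E) ^ 2"
proof -
  have "real (2 * card {(i::nat, j). i < j \<and> j < s}) = real (s * (s - 1))"
    by (simp only: card_index_pairs)
  then have "2 * real (card {(i::nat, j). i < j \<and> j < s}) = real s * (real s - 1)"
    by (cases s) (simp_all add: algebra_simps)
  then show ?thesis
    unfolding expectation_pair_count_index_pairs by (simp add: mult_ac)
qed

private lemma second_moment_pair_count_le:
  "measure_pmf.expectation (uniform_sample E s) (\<lambda>r. real (pair_count S s r) ^ 2)
     \<le> (measure_pmf.expectation (uniform_sample E s) (\<lambda>r. real (pair_count S s r))) ^ 2
       + measure_pmf.expectation (uniform_sample E s) (\<lambda>r. real (pair_count S s r))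
       + 4 * real s ^ 3 * ((\<Sum>x\<in>E. deg x ^ 2) / real (card E) ^ 3)"
proof -
  define D where "D = uniform_sample E s"
  define P where "P = {(i::nat, j). i < j \<and> j < s}"
  define ind where "ind p r = (of_bool ({r (fst p), r (snd p)} \<in> S) :: real)"
    for p :: "nat \<times> nat" and r :: "nat \<Rightarrow> 'a"
  define \<mu> where "\<mu> = 2 * real (card S) / real (card E) ^ 2"
  define a where "a = (\<Sum>x\<in>E. deg x ^ 2) / real (card E) ^ 3"
  have "measure_pmf.expectation D (\<lambda>r. real (pair_count S s r) ^ 2)
      = (\<Sum>p\<in>P. \<Sum>q\<in>P. measure_pmf.expectation D (\<lambda>r. ind p r * ind q r))"
    unfolding pair_count_eq_sum D_def
    by (simp add: P_def ind_def power2_eq_square sum_product Bochner_Integration.integral_sum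
        integrable_uniform_sample)
  also have "\<dots> \<le> (\<Sum>p\<in>P. \<Sum>q\<in>P. \<mu> ^ 2 + of_bool (p = q) * \<mu>
                     + of_bool (q \<noteq> p \<and> {fst p, snd p} \<inter> {fst q, snd q} \<noteq> {}) * a)"
  proof (intro sum_mono)
    fix p q assume "p \<in> P" "q \<in> P"
    then show "measure_pmf.expectation D (\<lambda>r. ind p r * ind q r)
        \<le> \<mu> ^ 2 + of_bool (p = q) * \<mu> + of_bool (q \<noteq> p \<and> {fst p, snd p} \<inter> {fst q, snd q} \<noteq> {}) * a"
      using expectation_pair_indicator_product_le[of "fst p" "snd p" "fst q" "snd q"]
      by (auto simp: P_def D_def ind_def \<mu>_def a_def prod_eq_iff)
  qed
  also have "\<dots> \<le> (real (card P) * \<mu>) ^ 2 + real (card P) * \<mu> + 4 * real s ^ 3 * a"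
    unfolding P_def by (rule sum_index_pairs_moment_bound) (simp add: a_def sum_nonneg)
  finally show ?thesis
    by (simp only: D_def P_def \<mu>_def a_def expectation_pair_count_index_pairs)
qed

lemma variance_pair_count:
  "measure_pmf.variance (uniform_sample E s) (\<lambda>r. real (pair_count S s r))
     \<le> measure_pmf.expectation (uniform_sample E s) (\<lambda>r. real (pair_count S s r))
       + 4 * real s ^ 3 * (\<Sum>x\<in>E. deg x ^ 2) / real (card E) ^ 3"
  using second_moment_pair_count_le
    measure_pmf.variance_eq[OF integrable_uniform_sample integrable_uniform_sample,
      of "\<lambda>r. real (pair_count S s r)"]
  by simp

end

section \<open>Wedges and triangles\<close>

lemma card_Int_le_one_if_card_two:
  assumes "card f = 2" "card g = 2" "f \<noteq> g"
  shows "card (f \<inter> g) \<le> 1"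
proof (rule ccontr)
  assume "\<not> card (f \<inter> g) \<le> 1"
  then have "card f \<le> card (f \<inter> g)" "card g \<le> card (f \<inter> g)" using assms(1,2) by auto
  moreover have "finite f" "finite g" using assms(1,2) by (auto intro: card_ge_0_finite)
  ultimately have "f \<inter> g = f" "f \<inter> g = g" by (metis card_seteq inf_le1, metis card_seteq inf_le2)
  with assms(3) show False by simp
qed

lemma wedges_subset_doubletons: "wedges es \<subseteq> doubletons (set es)"
  by (auto simp: wedges_def)

lemma finite_wedges: "finite (wedges es)"
  using finite_subset[OF wedges_subset_doubletons finite_doubletons] by blast

lemma card_wedges_le: "card (wedges es) \<le> length es ^ 2"
proof -
  have "card (wedges es) \<le> card (doubletons (set es))"
    by (intro card_mono finite_doubletons wedges_subset_doubletons) simp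
  also have "\<dots> \<le> card (set es) ^ 2"
    by (cases "2 \<le> card (set es)") (simp_all add: card_doubletons binomial_le_pow binomial_eq_0)
  also have "\<dots> \<le> length es ^ 2"
    by (simp add: card_length power_mono)
  finally show ?thesis .
qed

lemma doubletons_star_subset_wedges:
  assumes "edge_stream es" "F \<subseteq> set es" "\<And>f. f \<in> F \<Longrightarrow> u \<in> f"
  shows "doubletons F \<subseteq> wedges es"
proof
  fix X assume "X \<in> doubletons F"
  then obtain f g where X: "X = {f, g}" "f \<in> F" "g \<in> F" "f \<noteq> g" by (rule in_doubletonsE)
  have two: "card f = 2" "card g = 2" using X assms(1,2) by (auto simp: edge_stream_def)
  then have "finite (f \<inter> g)" by (auto intro: card_ge_0_finite)
  moreover have "u \<in> f \<inter> g" using X assms(3) by auto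
  ultimately have "card (f \<inter> g) \<ge> 1" by (metis card_0_eq empty_iff less_one not_le)
  then have "card (f \<inter> g) = 1" using card_Int_le_one_if_card_two[OF two X(4)] by simp
  then show "X \<in> wedges es" using X assms(2) unfolding wedges_def by blast
qed

lemma doubleton_in_wedges_iff:
  "{e, f} \<in> wedges es \<longleftrightarrow> e \<in> set es \<and> f \<in> set es \<and> e \<noteq> f \<and> card (e \<inter> f) = 1"
  unfolding wedges_def by (auto simp: doubleton_eq_iff Int_commute)

lemma two_mult_choose_two: "2 * (n choose 2) = n * (n - 1)"
  by (induction n) (auto simp: numeral_2_eq_2 algebra_simps)

lemma stars_choose_two_le_card_wedges:
  assumes "edge_stream es" "u \<noteq> v"
  shows "(card {f \<in> set es. u \<in> f} choose 2) + (card {f \<in> set es. v \<in> f} choose 2) \<le> card (wedges es)"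
proof -
  define Fu where "Fu = {f \<in> set es. u \<in> f}"
  define Fv where "Fv = {f \<in> set es. v \<in> f}"
  have "Fu \<inter> Fv \<subseteq> {{u, v}}"
  proof
    fix f assume f: "f \<in> Fu \<inter> Fv"
    then have "{u, v} \<subseteq> f" "card f = 2" using assms(1) by (auto simp: Fu_def Fv_def edge_stream_def)
    moreover have "finite f" using \<open>card f = 2\<close> by (auto intro: card_ge_0_finite)
    ultimately have "{u, v} = f" using assms(2) by (intro card_seteq) auto
    then show "f \<in> {{u, v}}" by simp
  qed
  then have "doubletons Fu \<inter> doubletons Fv = {}"
    using doubletons_mono[of "Fu \<inter> Fv" "{{u, v}}"] by (simp add: doubletons_Int doubletons_singleton)
  moreover have "finite (doubletons Fu)" "finite (doubletons Fv)"
    by (simp_all add: Fu_def Fv_def finite_doubletons)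
  ultimately have "card (doubletons Fu) + card (doubletons Fv) = card (doubletons Fu \<union> doubletons Fv)"
    by (simp add: card_Un_disjoint)
  also have "\<dots> \<le> card (wedges es)"
  proof (intro card_mono finite_wedges Un_least)
    show "doubletons Fu \<subseteq> wedges es"
      by (rule doubletons_star_subset_wedges[OF assms(1), of _ u]) (auto simp: Fu_def)
    show "doubletons Fv \<subseteq> wedges es"
      by (rule doubletons_star_subset_wedges[OF assms(1), of _ v]) (auto simp: Fv_def)
  qed
  finally show ?thesis
    by (simp add: Fu_def Fv_def card_doubletons)
qed

lemma wedge_degree_sq_le:
  assumes "edge_stream es" "e \<in> set es"
  shows "real (card {f \<in> set es. {e, f} \<in> wedges es}) ^ 2 \<le> 4 * real (card (wedges es))"
proof -
  obtain u v where e: "e = {u, v}" "u \<noteq> v"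
    using assms by (auto simp: edge_stream_def card_2_iff)
  define Fu where "Fu = {f \<in> set es. u \<in> f}"
  define Fv where "Fv = {f \<in> set es. v \<in> f}"
  define p where "p = card Fu - 1"
  define q where "q = card Fv - 1"
  have e_in: "e \<in> Fu" "e \<in> Fv" using assms(2) e by (auto simp: Fu_def Fv_def)
  then have card_F: "card Fu = Suc p" "card Fv = Suc q"
    by (auto simp: p_def q_def Fu_def Fv_def card_gt_0_iff intro!: Suc_pred[symmetric])
  have "{f \<in> set es. {e, f} \<in> wedges es} \<subseteq> (Fu - {e}) \<union> (Fv - {e})"
  proof
    fix f assume "f \<in> {f \<in> set es. {e, f} \<in> wedges es}"
    then have "f \<in> set es" "e \<noteq> f" "e \<inter> f \<noteq> {}"
      by (auto simp: doubleton_in_wedges_iff)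
    then show "f \<in> (Fu - {e}) \<union> (Fv - {e})" using e by (auto simp: Fu_def Fv_def)
  qed
  then have "card {f \<in> set es. {e, f} \<in> wedges es} \<le> card ((Fu - {e}) \<union> (Fv - {e}))"
    by (intro card_mono) (simp_all add: Fu_def Fv_def)
  also have "\<dots> \<le> card (Fu - {e}) + card (Fv - {e})"
    by (rule card_Un_le)
  also have "\<dots> = p + q"
    using e_in by (simp add: p_def q_def Fu_def Fv_def)
  finally have deg: "real (card {f \<in> set es. {e, f} \<in> wedges es}) \<le> real p + real q" by simp
  have "(card Fu choose 2) + (card Fv choose 2) \<le> card (wedges es)"
    unfolding Fu_def Fv_def by (rule stars_choose_two_le_card_wedges[OF assms(1) e(2)])
  then have "2 * ((card Fu choose 2) + (card Fv choose 2)) \<le> 2 * card (wedges es)" by simp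
  then have "real (Suc p * p + Suc q * q) \<le> real (2 * card (wedges es))"
    unfolding add_mult_distrib2 two_mult_choose_two card_F by (simp only: of_nat_le_iff diff_Suc_1)
  then have W: "real (Suc p) * real p + real (Suc q) * real q \<le> 2 * real (card (wedges es))"
    by (simp only: of_nat_add of_nat_mult of_nat_numeral)
  have "real (card {f \<in> set es. {e, f} \<in> wedges es}) ^ 2 \<le> (real p + real q) ^ 2"
    using deg by (intro power_mono) auto
  also have "\<dots> \<le> 2 * (real (Suc p) * real p + real (Suc q) * real q)"
    using zero_le_power2[of "real p - real q"] by (simp add: power2_eq_square algebra_simps)
  also have "\<dots> \<le> 4 * real (card (wedges es))"
    using W by simp
  finally show ?thesis .
qed

lemma tri_edges_eq_doubletons: "tri_edges t = doubletons t"
  by (auto simp: tri_edges_def doubletons_def card_2_iff)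

lemma tri_edges_subset_edges: "t \<in> triangles es \<Longrightarrow> tri_edges t \<subseteq> set es"
  by (auto simp: tri_edges_def triangles_def)

lemma card_tri_edges: "t \<in> triangles es \<Longrightarrow> card (tri_edges t) = 3"
proof -
  assume "t \<in> triangles es"
  then have "card t = 3" by (simp add: triangles_def)
  then have "finite t" by (auto intro: card_ge_0_finite)
  with \<open>card t = 3\<close> show ?thesis
    by (simp add: tri_edges_eq_doubletons card_doubletons numeral_eq_Suc)
qed

lemma two_edges_of_triangle:
  assumes "card t = 3" "f \<in> doubletons t" "g \<in> doubletons t" "f \<noteq> g"
  shows "f \<union> g = t" "card (f \<inter> g) = 1"
proof -
  have fg: "f \<subseteq> t" "g \<subseteq> t" "card f = 2" "card g = 2"
    using assms(2,3) by (auto simp: doubletons_def)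
  have fin: "finite t" "finite f" "finite g"
    using assms(1) fg by (auto intro: card_ge_0_finite)
  have "card (f \<union> g) + card (f \<inter> g) = 4"
    using card_Un_Int[OF fin(2,3)] fg by simp
  moreover have "card (f \<union> g) \<le> 3"
    using card_mono[OF fin(1), of "f \<union> g"] fg assms(1) by simp
  moreover have "card (f \<inter> g) \<le> 1"
    using card_Int_le_one_if_card_two[OF fg(3,4) assms(4)] .
  ultimately have "card (f \<union> g) = 3" "card (f \<inter> g) = 1" by linarith+
  then show "card (f \<inter> g) = 1" "f \<union> g = t"
    using card_seteq[OF fin(1), of "f \<union> g"] fg assms(1) by simp_all
qed

lemma card_eq_3_sorted:
  fixes X :: "'a :: linorder set"
  assumes "card X = 3"
  obtains i j k where "X = {i, j, k}" "i < j" "j < k"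
proof -
  have fin: "finite X" using assms by (auto intro: card_ge_0_finite)
  define xs where "xs = sorted_list_of_set X"
  have "length xs = 3" using assms by (simp add: xs_def)
  then obtain i j k where xs: "xs = [i, j, k]"
    by (auto simp: numeral_eq_Suc length_Suc_conv)
  have "sorted_wrt (<) [i, j, k]"
    using sorted_list_of_set.strict_sorted_key_list_of_set[of X] unfolding xs_def[symmetric] xs .
  moreover have "X = {i, j, k}"
    using set_sorted_list_of_set[OF fin] unfolding xs_def[symmetric] xs by simp
  ultimately show ?thesis using that by simp
qed

definition tri_positions :: "nat set list \<Rightarrow> nat set \<Rightarrow> nat set" where
  "tri_positions es t = {x. x < length es \<and> es ! x \<in> tri_edges t}"

definition fc_wedge_of :: "nat set list \<Rightarrow> nat set \<Rightarrow> nat set set" where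
  "fc_wedge_of es t = (\<lambda>x. es ! x) ` (tri_positions es t - {Max (tri_positions es t)})"

lemma tri_positions_eq:
  assumes "distinct es" "i < j" "j < k" "k < length es" "{es ! i, es ! j, es ! k} = tri_edges t"
  shows "tri_positions es t = {i, j, k}"
  using nth_eq_iff_index_eq[OF assms(1)] assms(2-4)
  unfolding tri_positions_def assms(5)[symmetric] by auto

lemma fc_wedge_of_eq:
  assumes "distinct es" "i < j" "j < k" "k < length es" "{es ! i, es ! j, es ! k} = tri_edges t"
  shows "fc_wedge_of es t = {es ! i, es ! j}"
proof -
  have "tri_positions es t - {Max (tri_positions es t)} = {i, j}"
    using assms(2,3) by (simp add: tri_positions_eq[OF assms]) auto
  then show ?thesis by (simp add: fc_wedge_of_def)
qed

lemma triangle_in_stream_order: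
  assumes "edge_stream es" "t \<in> triangles es"
  obtains i j k where "i < j" "j < k" "k < length es" "{es ! i, es ! j, es ! k} = tri_edges t"
proof -
  let ?P = "tri_positions es t"
  have dist: "distinct es" using assms(1) by (simp add: edge_stream_def)
  have image: "(\<lambda>x. es ! x) ` ?P = tri_edges t"
  proof
    show "tri_edges t \<subseteq> (\<lambda>x. es ! x) ` ?P"
    proof
      fix f assume f: "f \<in> tri_edges t"
      then have "f \<in> set es" using tri_edges_subset_edges[OF assms(2)] by blast
      then obtain x where "x < length es" "es ! x = f" by (metis in_set_conv_nth)
      with f show "f \<in> (\<lambda>x. es ! x) ` ?P" by (auto simp: tri_positions_def)
    qed
  qed (auto simp: tri_positions_def)
  have "inj_on (\<lambda>x. es ! x) ?P"
    using dist by (intro inj_on_nth) (auto simp: tri_positions_def)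
  then have "card ?P = 3"
    using card_image image card_tri_edges[OF assms(2)] by metis
  then obtain i j k where P: "?P = {i, j, k}" "i < j" "j < k" by (rule card_eq_3_sorted)
  have "k < length es" using P(1) by (auto simp: tri_positions_def)
  moreover have "{es ! i, es ! j, es ! k} = tri_edges t" using image P(1) by simp
  ultimately show ?thesis using that P(2,3) by blast
qed

lemma fc_wedges_eq_image:
  assumes "edge_stream es"
  shows "fc_wedges es = fc_wedge_of es ` triangles es"
proof
  have dist: "distinct es" using assms by (simp add: edge_stream_def)
  show "fc_wedges es \<subseteq> fc_wedge_of es ` triangles es"
  proof
    fix w assume "w \<in> fc_wedges es"
    then have "\<exists>i j k. w = {es ! i, es ! j} \<and> i < j \<and> j < k \<and> k < length es \<and>
        (\<exists>t\<in>triangles es. {es ! i, es ! j, es ! k} = tri_edges t)"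
      unfolding fc_wedges_def by (simp only: mem_Collect_eq)
    then obtain i j k t where w: "w = {es ! i, es ! j}"
        and ijk: "i < j" "j < k" "k < length es" "{es ! i, es ! j, es ! k} = tri_edges t"
        and t: "t \<in> triangles es"
      by blast
    have "w = fc_wedge_of es t" unfolding w fc_wedge_of_eq[OF dist ijk] ..
    with t show "w \<in> fc_wedge_of es ` triangles es" by (rule rev_image_eqI)
  qed
  show "fc_wedge_of es ` triangles es \<subseteq> fc_wedges es"
  proof
    fix w assume "w \<in> fc_wedge_of es ` triangles es"
    then obtain t where t: "t \<in> triangles es" "w = fc_wedge_of es t" by blast
    obtain i j k where ijk: "i < j" "j < k" "k < length es" "{es ! i, es ! j, es ! k} = tri_edges t"
      using triangle_in_stream_order[OF assms t(1)] .
    have "w = {es ! i, es ! j}" unfolding t(2) fc_wedge_of_eq[OF dist ijk] ..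
    then show "w \<in> fc_wedges es"
      unfolding fc_wedges_def mem_Collect_eq
      by (intro exI[of _ i] exI[of _ j] exI[of _ k] conjI bexI[of _ t]) (simp_all add: ijk t(1))
  qed
qed

lemma fc_wedge_of_triangle:
  assumes "edge_stream es" "t \<in> triangles es"
  shows "fc_wedge_of es t \<in> wedges es" "\<Union> (fc_wedge_of es t) = t"
proof -
  have dist: "distinct es" using assms(1) by (simp add: edge_stream_def)
  obtain i j k where ijk: "i < j" "j < k" "k < length es" "{es ! i, es ! j, es ! k} = tri_edges t"
    using triangle_in_stream_order[OF assms] .
  have w: "fc_wedge_of es t = {es ! i, es ! j}"
    using fc_wedge_of_eq[OF dist ijk] .
  have "es ! i \<noteq> es ! j" using ijk dist by (simp add: nth_eq_iff_index_eq)
  moreover have "es ! i \<in> doubletons t" "es ! j \<in> doubletons t"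
    using ijk(4) by (auto simp flip: tri_edges_eq_doubletons)
  moreover have "card t = 3" using assms(2) by (simp add: triangles_def)
  ultimately have "es ! i \<union> es ! j = t" "card (es ! i \<inter> es ! j) = 1"
    using two_edges_of_triangle[of t "es ! i" "es ! j"] by simp_all
  moreover have "es ! i \<in> set es" "es ! j \<in> set es" using ijk by simp_all
  ultimately show "fc_wedge_of es t \<in> wedges es" "\<Union> (fc_wedge_of es t) = t"
    using \<open>es ! i \<noteq> es ! j\<close> by (simp_all add: w doubleton_in_wedges_iff)
qed

lemma fc_wedges_subset_wedges:
  assumes "edge_stream es"
  shows "fc_wedges es \<subseteq> wedges es"
  unfolding fc_wedges_eq_image[OF assms] using fc_wedge_of_triangle(1)[OF assms] by blast

lemma card_fc_wedges:
  assumes "edge_stream es"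
  shows "card (fc_wedges es) = card (triangles es)"
proof -
  have "inj_on (fc_wedge_of es) (triangles es)"
  proof (rule inj_onI)
    fix t t' assume "t \<in> triangles es" "t' \<in> triangles es" "fc_wedge_of es t = fc_wedge_of es t'"
    then show "t = t'" using fc_wedge_of_triangle(2)[OF assms] by metis
  qed
  then show ?thesis unfolding fc_wedges_eq_image[OF assms] by (rule card_image)
qed

lemma card_triangles_le_card_wedges: "edge_stream es \<Longrightarrow> card (triangles es) \<le> card (wedges es)"
  using card_mono[OF finite_wedges fc_wedges_subset_wedges] card_fc_wedges by metis

section \<open>Concentration of the sampled wedge counts\<close>

lemma edge_sample_eq_uniform_sample: "edge_sample es s = uniform_sample (set es) s"
  by (simp add: edge_sample_def uniform_sample_def)

lemma card_set_edge_stream: "edge_stream es \<Longrightarrow> card (set es) = length es"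
  by (simp add: edge_stream_def distinct_card)

lemma expectation_pair_count_edge_sample:
  assumes "edge_stream es" "es \<noteq> []" "S \<subseteq> wedges es"
  shows "measure_pmf.expectation (edge_sample es s) (\<lambda>r. real (pair_count S s r))
       = real s * (real s - 1) * real (card S) / real (length es) ^ 2"
  using expectation_pair_count[of "set es" S s] assms wedges_subset_doubletons[of es]
  by (simp add: edge_sample_eq_uniform_sample card_set_edge_stream)

lemma sum_wedge_degree_sq_le:
  assumes "edge_stream es"
  defines "W \<equiv> real (card (wedges es))"
  shows "(\<Sum>x\<in>set es. real (card {y \<in> set es. {x, y} \<in> wedges es}) ^ 2) \<le> 4 * W * sqrt W"
proof -
  let ?d = "\<lambda>x. real (card {y \<in> set es. {x, y} \<in> wedges es})"
  have "?d x ^ 2 \<le> 2 * sqrt W * ?d x" if "x \<in> set es" for x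
  proof -
    have "?d x \<le> sqrt (4 * W)"
      using real_sqrt_le_mono[OF wedge_degree_sq_le[OF assms(1) that]] by (simp add: W_def)
    then have "?d x \<le> 2 * sqrt W" by (simp add: real_sqrt_mult)
    then show ?thesis by (simp add: power2_eq_square mult_right_mono)
  qed
  then have "(\<Sum>x\<in>set es. ?d x ^ 2) \<le> (\<Sum>x\<in>set es. 2 * sqrt W * ?d x)"
    by (rule sum_mono)
  also have "\<dots> = 2 * sqrt W * real (\<Sum>x\<in>set es. card {y \<in> set es. {x, y} \<in> wedges es})"
    by (simp add: sum_distrib_left)
  also have "\<dots> = 4 * W * sqrt W"
    using sum_card_neighbours[OF _ wedges_subset_doubletons, of es] by (simp add: W_def)
  finally show ?thesis .
qed

lemma variance_pair_count_edge_sample_le: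
  assumes "edge_stream es" "es \<noteq> []" "S \<subseteq> wedges es"
  defines "m \<equiv> real (length es)" and "W \<equiv> real (card (wedges es))"
  shows "measure_pmf.variance (edge_sample es s) (\<lambda>r. real (pair_count S s r))
       \<le> real s * (real s - 1) * W / m ^ 2 + 16 * (real s * sqrt W / m) ^ 3"
proof -
  let ?deg = "\<lambda>S x. real (card {y \<in> set es. {x, y} \<in> S})"
  have S_doubletons: "S \<subseteq> doubletons (set es)"
    using assms(3) wedges_subset_doubletons by blast
  have m_pos: "m > 0" using assms(2) by (simp add: m_def)
  have expectation_le: "real s * (real s - 1) * real (card S) / m ^ 2 \<le> real s * (real s - 1) * W / m ^ 2"
  proof (intro divide_right_mono mult_left_mono)
    show "real (card S) \<le> W" using card_mono[OF finite_wedges assms(3)] by (simp add: W_def)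
    show "0 \<le> real s * (real s - 1)" by (cases s) simp_all
  qed simp
  have "(\<Sum>x\<in>set es. ?deg S x ^ 2) \<le> 4 * W * sqrt W"
  proof -
    have "?deg S x \<le> ?deg (wedges es) x" for x
      using assms(3) by (intro of_nat_mono card_mono) auto
    then have "(\<Sum>x\<in>set es. ?deg S x ^ 2) \<le> (\<Sum>x\<in>set es. ?deg (wedges es) x ^ 2)"
      by (intro sum_mono power_mono) auto
    then show ?thesis using sum_wedge_degree_sq_le[OF assms(1)] by (simp add: W_def)
  qed
  then have "4 * real s ^ 3 * (\<Sum>x\<in>set es. ?deg S x ^ 2) / m ^ 3 \<le> 4 * real s ^ 3 * (4 * W * sqrt W) / m ^ 3"
    using m_pos by (intro divide_right_mono mult_left_mono) auto
  also have "\<dots> = 16 * (real s * sqrt W / m) ^ 3"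
    by (simp add: W_def power_divide power_mult_distrib power3_eq_cube)
  finally have "4 * real s ^ 3 * (\<Sum>x\<in>set es. ?deg S x ^ 2) / m ^ 3 \<le> 16 * (real s * sqrt W / m) ^ 3" .
  with expectation_le show ?thesis
    using variance_pair_count[of "set es" S s] S_doubletons assms(1,2)
      expectation_pair_count[of "set es" S s]
    by (simp add: edge_sample_eq_uniform_sample card_set_edge_stream m_def)
qed

lemma edge_stream_ne_Nil_if_triangle:
  assumes "edge_stream es" "1 \<le> card (triangles es)"
  shows "es \<noteq> []"
proof
  assume "es = []"
  then have "wedges es = {}" by (simp add: wedges_def)
  with assms show False using card_triangles_le_card_wedges[OF assms(1)] by simp
qed

text \<open>Here \<open>b\<close> stands for \<open>\<beta>\<^sup>3\<close>, \<open>q\<close> for \<open>s\<surd>W/m\<close> and \<open>e\<close> for \<open>E Y\<close>.\<close>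
lemma variance_budget_lt:
  fixes b q e :: real
  assumes b: "0 < b" "b \<le> 1" and bq: "100000 \<le> b * q" and qe: "q ^ 2 \<le> 2 * e"
  shows "e + 16 * q ^ 3 < b / 125 * e ^ 2"
proof -
  have q: "q > 0" using zero_less_mult_pos[of b q] b bq by linarith
  have e: "e > 0" using zero_less_power[OF q, of 2] qe by linarith
  have "100000 ^ 2 \<le> (b * q) ^ 2" using bq by (intro power_mono) auto
  also have "\<dots> = b * (b * q ^ 2)" by (simp add: power2_eq_square)
  also have "\<dots> \<le> b * q ^ 2" using b by (intro mult_left_le_one_le) auto
  also have "\<dots> \<le> b * (2 * e)" using b qe by (intro mult_left_mono) auto
  finally have "250 \<le> b * e" by simp
  then have small_e: "e \<le> b / 250 * e ^ 2"
    using e by (simp add: power2_eq_square field_simps)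
  have "100000 * q ^ 3 \<le> (b * q) * q ^ 3" using bq q by (intro mult_right_mono) auto
  also have "\<dots> = b * (q ^ 2) ^ 2" by (simp add: power2_eq_square power3_eq_cube)
  also have "\<dots> \<le> b * (2 * e) ^ 2" using b qe by (intro mult_left_mono power_mono) auto
  finally have "25000 * q ^ 3 \<le> b * e ^ 2" by (simp add: power2_eq_square)
  moreover have "0 < q ^ 3" using q by simp
  ultimately have "4000 * q ^ 3 < b * e ^ 2" by linarith
  then have "16 * q ^ 3 < b / 250 * e ^ 2" by simp
  with small_e show ?thesis by simp
qed

lemma sample_size_bounds:
  assumes es: "edge_stream es" and T: "1 \<le> card (triangles es)" and \<beta>: "0 < \<beta>" "\<beta> < 1"
    and s: "100000 * real (length es) / (\<beta> ^ 3 * sqrt (real (card (triangles es)))) \<le> real s"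
  shows "100000 * real (length es) \<le> \<beta> ^ 3 * real s * sqrt (real (card (triangles es)))"
    and "2 \<le> real s"
proof -
  define m T where "m = real (length es)" and "T = real (card (triangles es))"
  have "card (triangles es) \<le> length es ^ 2"
    using card_triangles_le_card_wedges[OF es] card_wedges_le[of es] by linarith
  then have "T \<le> m ^ 2" unfolding T_def m_def by (metis of_nat_le_iff of_nat_power)
  then have "sqrt T \<le> m" using real_sqrt_le_mono[of T "m ^ 2"] by (simp add: m_def)
  then have sqrt_T: "1 \<le> sqrt T" "sqrt T \<le> m" using T by (simp_all add: T_def)
  have \<beta>3: "0 < \<beta> ^ 3" "\<beta> ^ 3 \<le> 1" using \<beta> by (simp_all add: power_le_one)
  have "\<beta> ^ 3 * sqrt T \<le> sqrt T" using \<beta>3 sqrt_T by (intro mult_left_le_one_le) auto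
  with sqrt_T have den: "0 < \<beta> ^ 3 * sqrt T" "\<beta> ^ 3 * sqrt T \<le> m"
    using \<beta>3 by (simp, linarith)
  show hyp: "100000 * m \<le> \<beta> ^ 3 * real s * sqrt T"
    using s den(1) by (simp add: m_def T_def pos_divide_le_eq mult_ac)
  also have "\<dots> = real s * (\<beta> ^ 3 * sqrt T)" by (simp add: mult_ac)
  also have "\<dots> \<le> real s * m" using den(2) by (intro mult_left_mono) auto
  finally show "2 \<le> real s" using sqrt_T by simp
qed

lemma pair_count_wedge_subset_concentration:
  assumes es: "edge_stream es" and S: "S \<subseteq> wedges es" and T: "1 \<le> card (triangles es)"
    and \<beta>: "0 < \<beta>" "\<beta> < 1"
    and s: "100000 * real (length es) / (\<beta> ^ 3 * sqrt (real (card (triangles es)))) \<le> real s"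
  defines "EY \<equiv> real s * (real s - 1) * real (card (wedges es)) / real (length es) ^ 2"
  shows "measure_pmf.prob (edge_sample es s)
           {r. \<bar>real (pair_count S s r)
                - measure_pmf.expectation (edge_sample es s) (\<lambda>r. real (pair_count S s r))\<bar>
               \<le> \<beta> / 5 * EY}
         > 1 - \<beta> / 5"
proof -
  define m W T where "m = real (length es)" and "W = real (card (wedges es))"
    and "T = real (card (triangles es))"
  define q where "q = real s * sqrt W / m"
  have T_le_W: "T \<le> W" using card_triangles_le_card_wedges[OF es] by (simp add: T_def W_def)
  have es_ne: "es \<noteq> []" using edge_stream_ne_Nil_if_triangle[OF es T] .
  then have m_pos: "m > 0" by (simp add: m_def)
  note size = sample_size_bounds[OF es T \<beta> s]
  have "100000 * m \<le> \<beta> ^ 3 * real s * sqrt W"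
    using size(1) T_le_W \<beta> by (simp add: m_def T_def order_trans mult_left_mono)
  then have bq: "100000 \<le> \<beta> ^ 3 * q" using m_pos by (simp add: q_def pos_le_divide_eq mult_ac)
  have "q ^ 2 = real s * real s * W / m ^ 2"
    by (simp add: q_def W_def power_divide power_mult_distrib power2_eq_square)
  also have "\<dots> \<le> 2 * (real s * (real s - 1)) * W / m ^ 2"
    using size(2) by (intro divide_right_mono mult_right_mono) (simp_all add: W_def algebra_simps)
  finally have qe: "q ^ 2 \<le> 2 * EY" by (simp add: EY_def W_def m_def)
  have EY_pos: "EY > 0"
    using size(2) T_le_W T m_pos by (simp add: EY_def W_def T_def m_def)
  have "measure_pmf.variance (edge_sample es s) (\<lambda>r. real (pair_count S s r)) \<le> EY + 16 * q ^ 3"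
    using variance_pair_count_edge_sample_le[OF es es_ne S] by (simp add: EY_def q_def W_def m_def)
  also have "\<dots> < \<beta> ^ 3 / 125 * EY ^ 2"
    using variance_budget_lt[OF _ _ bq qe] \<beta> by (simp add: power_le_one)
  also have "\<dots> = \<beta> / 5 * (\<beta> / 5 * EY) ^ 2"
    by (simp add: power2_eq_square power3_eq_cube)
  finally show ?thesis
    using es_ne \<beta> EY_pos
    by (intro measure_pmf_prob_abs_deviation_le_gt)
      (simp_all add: edge_sample_eq_uniform_sample finite_set_pmf_uniform_sample pos_divide_less_eq)
qed

theorem mainTheorem8:
  shows "\<exists>c::real > 0. \<forall>(es :: nat set list) (\<beta>::real) (s::nat).
    edge_stream es \<longrightarrow>
    card (wedges es) \<ge> length es \<longrightarrow>
    card (triangles es) \<ge> 1 \<longrightarrow>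
    0 < \<beta> \<longrightarrow> \<beta> < 1 \<longrightarrow>
    real s \<ge> c * real (length es) / (\<beta> ^ 3 * sqrt (real (card (triangles es)))) \<longrightarrow>
    (let m = real (length es); W = real (card (wedges es)); T = real (card (triangles es));
         \<beta>' = \<beta> / 5; D = edge_sample es s;
         EY = measure_pmf.expectation D (\<lambda>r. real (Ycount es s r));
         EZ = measure_pmf.expectation D (\<lambda>r. real (Zcount es s r))
     in EY = real s * (real s - 1) * W / m ^ 2 \<and>
        measure_pmf.prob D {r. \<bar>real (Ycount es s r) - EY\<bar> \<le> \<beta>' * EY} > 1 - \<beta>' \<and>
        EZ = real s * (real s - 1) * T / m ^ 2 \<and>
        measure_pmf.prob D {r. \<bar>real (Zcount es s r) - EZ\<bar> \<le> (\<beta>' * W / T) * EZ} > 1 - \<beta>')"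
proof (intro exI[of _ "100000 :: real"] conjI allI impI)
  fix es :: "nat set list" and \<beta> :: real and s :: nat
  assume es: "edge_stream es" and "length es \<le> card (wedges es)" and T: "1 \<le> card (triangles es)"
    and \<beta>: "0 < \<beta>" "\<beta> < 1"
    and size: "100000 * real (length es) / (\<beta> ^ 3 * sqrt (real (card (triangles es)))) \<le> real s"
  define EY where "EY = real s * (real s - 1) * real (card (wedges es)) / real (length es) ^ 2"
  have es_ne: "es \<noteq> []" using edge_stream_ne_Nil_if_triangle[OF es T] .
  have Y: "Ycount es s = pair_count (wedges es) s" and Z: "Zcount es s = pair_count (fc_wedges es) s"
    by (simp_all add: fun_eq_iff Ycount_def Zcount_def pair_count_def)
  note concentration = pair_count_wedge_subset_concentration[OF es _ T \<beta> size]
  have EZ: "measure_pmf.expectation (edge_sample es s) (\<lambda>r. real (Zcount es s r))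
      = real s * (real s - 1) * real (card (triangles es)) / real (length es) ^ 2"
    using expectation_pair_count_edge_sample[OF es es_ne fc_wedges_subset_wedges[OF es]]
    by (simp add: Z card_fc_wedges[OF es])
  have "\<beta> / 5 * real (card (wedges es)) / real (card (triangles es))
      * measure_pmf.expectation (edge_sample es s) (\<lambda>r. real (Zcount es s r)) = \<beta> / 5 * EY"
    using T by (simp add: EZ EY_def)
  then show "let m = real (length es); W = real (card (wedges es)); T = real (card (triangles es));
         \<beta>' = \<beta> / 5; D = edge_sample es s;
         EY = measure_pmf.expectation D (\<lambda>r. real (Ycount es s r));
         EZ = measure_pmf.expectation D (\<lambda>r. real (Zcount es s r))
     in EY = real s * (real s - 1) * W / m ^ 2 \<and>
        measure_pmf.prob D {r. \<bar>real (Ycount es s r) - EY\<bar> \<le> \<beta>' * EY} > 1 - \<beta>' \<and>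
        EZ = real s * (real s - 1) * T / m ^ 2 \<and>
        measure_pmf.prob D {r. \<bar>real (Zcount es s r) - EZ\<bar> \<le> (\<beta>' * W / T) * EZ} > 1 - \<beta>'"
    using expectation_pair_count_edge_sample[OF es es_ne subset_refl, of s] EZ
      concentration[OF subset_refl] concentration[OF fc_wedges_subset_wedges[OF es]]
    unfolding Let_def Y Z EY_def by simp
qed simp

end
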